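(* Let $M\ge 0$, $\mathcal{M}=\{0,\dots,M\}$, $T\ge 1$, $c_u,c_l>0$, $0\le\beta\le 1$, and let $P$ be a stochastic matrix on $\mathcal{M}$ with rows $P_{i,\cdot}$. For a probability vector $b$ on $\mathcal{M}$ and $r\in\mathcal{M}$ let $$\bar C(b;r)=c_l\sum_{i=r}^{M} b(i)(i-r)+c_u\sum_{i=0}^{r-1} b(i)(r-i),$$ and when $\sum_{j\ge r}b(j)>0$ let $T_r[b]$ be the probability vector with $T_r[b](i)=0$ for $i<r$ and $T_r[b](i)=b(i)/\sum_{j=r}^M b(j)$ for $i\ge r$. Define $$V_T(b)=\min_{r}\bar C(b;r),\qquad V_t(b)=\min_{r\in\mathcal{M}}\Big\{\bar C(b;r)+\beta\Big[\Big(\sum_{i=r}^M b(i)\Big)V_{t+1}(T_r[b]P)+\sum_{i=0}^{r-1} b(i)V_{t+1}(P_{i,\cdot})\Big]\Big\},\ t<T,$$ (the first bracketed term being $0$ when $\sum_{i\ge r}b(i)=0$), and the full-observation value functions $$V^{FO}_T(b)=\bar C(b;\pi^{m}(b)),\qquad V^{FO}_t(b)=\bar C(b;\pi^{m}(b))+\beta\sum_{i=0}^M b(i)\,V^{FO}_{t+1}(P_{i,\cdot}),\ t<T,$$ where $\pi^m(b)=\min\{r\in\mathcal{M}:\sum_{i=0}^r b(i)\ge \frac{c_l}{c_l+c_u}\}$. Then for every $t\in\{1,\dots,T\}$ and every probability vector $b$, $V_t(b)\ge V^{FO}_t(b)$.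
   Context: $V_t$ is the optimal cost-to-go of the partially observed tracking problem (a Markov chain $B_t$ with transition matrix $P$; action $r>B_t$ costs $c_u(r-B_t)$ and reveals $B_t$, action $r\le B_t$ costs $c_l(B_t-r)$ and reveals only $B_t\ge r$), written in terms of the belief $b$; $V^{FO}$ is the cost-to-go of a genie that observes the state after every step. *)

theory Defs
  imports "HOL-Analysis.Analysis"
begin

text \<open>States are 0..M; vectors and matrices are functions on nat, only their values on 0..M matter.\<close>

definition prob_vec :: "nat \<Rightarrow> (nat \<Rightarrow> real) \<Rightarrow> bool" where
  "prob_vec M b \<longleftrightarrow> (\<forall>i\<le>M. b i \<ge> 0) \<and> (\<Sum>i=0..M. b i) = 1"

definition stochastic :: "nat \<Rightarrow> (nat \<Rightarrow> nat \<Rightarrow> real) \<Rightarrow> bool" where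
  "stochastic M P \<longleftrightarrow> (\<forall>i\<le>M. prob_vec M (P i))"

definition Cbar :: "nat \<Rightarrow> real \<Rightarrow> real \<Rightarrow> (nat \<Rightarrow> real) \<Rightarrow> nat \<Rightarrow> real" where
  "Cbar M cu cl b r = cl * (\<Sum>i=r..M. b i * (real i - real r))
                    + cu * (\<Sum>i=0..<r. b i * (real r - real i))"

definition Tr :: "nat \<Rightarrow> nat \<Rightarrow> (nat \<Rightarrow> real) \<Rightarrow> (nat \<Rightarrow> real)" where
  "Tr M r b = (\<lambda>i. if i < r then 0 else b i / (\<Sum>j=r..M. b j))"

definition vecmat :: "nat \<Rightarrow> (nat \<Rightarrow> real) \<Rightarrow> (nat \<Rightarrow> nat \<Rightarrow> real) \<Rightarrow> (nat \<Rightarrow> real)" where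
  "vecmat M b P = (\<lambda>j. \<Sum>i=0..M. b i * P i j)"

text \<open>Vpo M cu cl beta P n b is V_t(b) with n = T - t steps remaining.\<close>
fun Vpo :: "nat \<Rightarrow> real \<Rightarrow> real \<Rightarrow> real \<Rightarrow> (nat \<Rightarrow> nat \<Rightarrow> real) \<Rightarrow> nat \<Rightarrow> (nat \<Rightarrow> real) \<Rightarrow> real" where
  "Vpo M cu cl beta P 0 b = Min ((\<lambda>r. Cbar M cu cl b r) ` {0..M})"
| "Vpo M cu cl beta P (Suc n) b = Min ((\<lambda>r. Cbar M cu cl b r + beta *
      ((if (\<Sum>i=r..M. b i) > 0
        then (\<Sum>i=r..M. b i) * Vpo M cu cl beta P n (vecmat M (Tr M r b) P)
        else 0)
       + (\<Sum>i=0..<r. b i * Vpo M cu cl beta P n (P i)))) ` {0..M})"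

definition pim :: "nat \<Rightarrow> real \<Rightarrow> real \<Rightarrow> (nat \<Rightarrow> real) \<Rightarrow> nat" where
  "pim M cu cl b = (LEAST r. r \<le> M \<and> (\<Sum>i=0..r. b i) \<ge> cl / (cl + cu))"

fun Vfo :: "nat \<Rightarrow> real \<Rightarrow> real \<Rightarrow> real \<Rightarrow> (nat \<Rightarrow> nat \<Rightarrow> real) \<Rightarrow> nat \<Rightarrow> (nat \<Rightarrow> real) \<Rightarrow> real" where
  "Vfo M cu cl beta P 0 b = Cbar M cu cl b (pim M cu cl b)"
| "Vfo M cu cl beta P (Suc n) b = Cbar M cu cl b (pim M cu cl b)
      + beta * (\<Sum>i=0..M. b i * Vfo M cu cl beta P n (P i))"

end

theory Submission
  imports Defs
begin

text \<open>
  The one-step cost \<open>Cbar b r\<close> is affine in the belief \<open>b\<close>, and its increments in \<open>r\<close>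
  are \<open>(cl + cu) * (b 0 + \<dots> + b r) - cl\<close>, so the newsvendor quantile \<open>pim b\<close> minimises it.
  Hence \<open>Cbar b (pim b)\<close> is a minimum of affine functions of \<open>b\<close>, and by induction the
  genie's value \<open>Vfo\<close> is concave in the belief. Now compare, for a fixed action \<open>r\<close>, the
  two continuations: the genie averages \<open>Vfo\<close> over the rows \<open>P i\<close> with weights \<open>b i\<close>,
  while the partially observing controller, on the event \<open>B \<ge> r\<close>, only knows the posterior
  \<open>Tr r b P\<close>, which is the corresponding mixture of rows. Jensen's inequality for the
  concave \<open>Vfo\<close>, the induction hypothesis, and the optimality of \<open>pim\<close> for the immediate
  cost give \<open>Vfo \<le> Vpo\<close>.
\<close>

lemma sum_split_at:
  fixes f :: "nat \<Rightarrow> 'a::comm_monoid_add"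
  assumes "r \<le> Suc M"
  shows "(\<Sum>i=0..M. f i) = (\<Sum>i=0..<r. f i) + (\<Sum>i=r..M. f i)"
proof -
  have "{0..M} = {0..<r} \<union> {r..M}" using assms by auto
  then show ?thesis by (simp add: sum.union_disjoint ivl_disj_int)
qed

lemma Cbar_Suc:
  assumes "(\<Sum>i=0..M. b i) = 1" "r < M"
  shows "Cbar M cu cl b (Suc r) = Cbar M cu cl b r - cl + (cl + cu) * (\<Sum>i=0..r. b i)"
proof -
  have upper: "(\<Sum>i=r..M. b i * (real i - real r))
      = (\<Sum>i=Suc r..M. b i * (real i - real (Suc r))) + (1 - (\<Sum>i=0..r. b i))"
  proof -
    have "(\<Sum>i=r..M. b i * (real i - real r)) = (\<Sum>i=Suc r..M. b i * (real i - real r))"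
      using assms(2) by (simp add: sum.atLeast_Suc_atMost)
    also have "\<dots> = (\<Sum>i=Suc r..M. b i * (real i - real (Suc r))) + (\<Sum>i=Suc r..M. b i)"
      by (simp add: sum.distrib[symmetric] algebra_simps)
    also have "(\<Sum>i=Suc r..M. b i) = 1 - (\<Sum>i=0..r. b i)"
      using sum_split_at[of "Suc r" M b] assms by (simp add: atLeastLessThanSuc_atLeastAtMost)
    finally show ?thesis .
  qed
  have lower: "(\<Sum>i=0..<Suc r. b i * (real (Suc r) - real i))
      = (\<Sum>i=0..<r. b i * (real r - real i)) + (\<Sum>i=0..r. b i)"
    by (simp add: atLeastLessThanSuc_atLeastAtMost[symmetric] sum.distrib[symmetric] algebra_simps)
  show ?thesis unfolding Cbar_def upper lower by (simp add: algebra_simps)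
qed

lemma le_at_sign_change:
  fixes f :: "nat \<Rightarrow> 'a::linorder"
  assumes down: "\<And>n. n < p \<Longrightarrow> f (Suc n) \<le> f n"
    and up: "\<And>n. p \<le> n \<Longrightarrow> n < M \<Longrightarrow> f n \<le> f (Suc n)"
    and "r \<le> M"
  shows "f p \<le> f r"
proof (cases "p \<le> r")
  case True
  then show ?thesis
  proof (induction rule: dec_induct)
    case (step n)
    have "f n \<le> f (Suc n)" using up step.hyps \<open>r \<le> M\<close> by simp
    with step.IH show ?case by (rule order.trans)
  qed simp
next
  case False
  then have "r \<le> p" by simp
  then show ?thesis
  proof (induction rule: inc_induct)
    case (step n)
    have "f (Suc n) \<le> f n" using down step.hyps by simp
    with step.IH show ?case by (rule order.trans)
  qed simp
qed

lemma pim_spec: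
  assumes "prob_vec M b" "cl > 0" "cu > 0"
  shows "pim M cu cl b \<le> M" "cl / (cl + cu) \<le> (\<Sum>i=0..pim M cu cl b. b i)"
    "\<And>r. r < pim M cu cl b \<Longrightarrow> (\<Sum>i=0..r. b i) < cl / (cl + cu)"
proof -
  let ?Q = "\<lambda>r. r \<le> M \<and> cl / (cl + cu) \<le> (\<Sum>i=0..r. b i)"
  have "?Q M"
    using assms unfolding prob_vec_def by (simp add: divide_le_eq_1)
  then have least: "?Q (pim M cu cl b)"
    unfolding pim_def by (rule LeastI)
  then show "pim M cu cl b \<le> M" "cl / (cl + cu) \<le> (\<Sum>i=0..pim M cu cl b. b i)"
    by auto
  fix r assume "r < pim M cu cl b"
  then have "\<not> ?Q r"
    unfolding pim_def by (rule not_less_Least)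
  then show "(\<Sum>i=0..r. b i) < cl / (cl + cu)"
    using least \<open>r < pim M cu cl b\<close> by auto
qed

lemma Cbar_pim_le:
  assumes b: "prob_vec M b" and "cl > 0" "cu > 0" "r \<le> M"
  shows "Cbar M cu cl b (pim M cu cl b) \<le> Cbar M cu cl b r"
proof (rule le_at_sign_change[where M = M])
  have sum1: "(\<Sum>i=0..M. b i) = 1" and nonneg: "\<forall>i\<le>M. b i \<ge> 0"
    using b unfolding prob_vec_def by auto
  have pos: "cl + cu > 0" using assms by simp
  note pim = pim_spec[OF assms(1-3)]
  show "Cbar M cu cl b (Suc n) \<le> Cbar M cu cl b n" if "n < pim M cu cl b" for n
  proof -
    have "(cl + cu) * (\<Sum>i=0..n. b i) < cl"
      using pim(3)[OF that] pos by (simp add: less_divide_eq mult.commute)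
    then show ?thesis using Cbar_Suc[OF sum1, of n] that pim(1) by simp
  qed
  show "Cbar M cu cl b n \<le> Cbar M cu cl b (Suc n)" if "pim M cu cl b \<le> n" "n < M" for n
  proof -
    have "(\<Sum>i=0..pim M cu cl b. b i) \<le> (\<Sum>i=0..n. b i)"
      using that nonneg by (intro sum_mono2) auto
    moreover have "cl \<le> (cl + cu) * (\<Sum>i=0..pim M cu cl b. b i)"
      using pim(2) pos by (simp add: divide_le_eq mult.commute)
    ultimately have "cl \<le> (cl + cu) * (\<Sum>i=0..n. b i)"
      using pos by (smt (verit) mult_left_mono)
    then show ?thesis using Cbar_Suc[OF sum1 that(2)] by simp
  qed
qed fact

lemma sum_mixture:
  fixes w :: "'k \<Rightarrow> 'a::comm_semiring_1"
  shows "(\<Sum>i\<in>I. (\<Sum>k\<in>K. w k * q k i) * g i) = (\<Sum>k\<in>K. w k * (\<Sum>i\<in>I. q k i * g i))"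
  by (simp add: sum_distrib_left sum_distrib_right mult.assoc sum.swap[of _ I])

lemma prob_vec_mixture:
  assumes "finite K" "\<And>k. k \<in> K \<Longrightarrow> w k \<ge> 0" "(\<Sum>k\<in>K. w k) = 1"
    "\<And>k. k \<in> K \<Longrightarrow> prob_vec M (q k)"
  shows "prob_vec M (\<lambda>j. \<Sum>k\<in>K. w k * q k j)"
  unfolding prob_vec_def
proof
  show "\<forall>i\<le>M. 0 \<le> (\<Sum>k\<in>K. w k * q k i)"
    using assms unfolding prob_vec_def by (auto intro!: sum_nonneg)
  have "(\<Sum>i=0..M. \<Sum>k\<in>K. w k * q k i) = (\<Sum>k\<in>K. w k * (\<Sum>i=0..M. q k i))"
    using sum_mixture[where g = "\<lambda>_. 1" and I = "{0..M}"] by simp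
  also have "\<dots> = (\<Sum>k\<in>K. w k)"
    using assms(4) unfolding prob_vec_def by (intro sum.cong) auto
  finally show "(\<Sum>i=0..M. \<Sum>k\<in>K. w k * q k i) = 1" using assms(3) by simp
qed

lemma Cbar_mixture:
  "Cbar M cu cl (\<lambda>j. \<Sum>k\<in>K. w k * q k j) r = (\<Sum>k\<in>K. w k * Cbar M cu cl (q k) r)"
  unfolding Cbar_def sum_mixture
  by (simp add: sum_distrib_left sum.distrib algebra_simps)

lemma Cbar_pim_mixture_ge:
  assumes "\<And>k. k \<in> K \<Longrightarrow> w k \<ge> 0" "\<And>k. k \<in> K \<Longrightarrow> prob_vec M (q k)"
    "prob_vec M (\<lambda>j. \<Sum>k\<in>K. w k * q k j)" "cl > 0" "cu > 0"
  shows "(\<Sum>k\<in>K. w k * Cbar M cu cl (q k) (pim M cu cl (q k)))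
    \<le> Cbar M cu cl (\<lambda>j. \<Sum>k\<in>K. w k * q k j) (pim M cu cl (\<lambda>j. \<Sum>k\<in>K. w k * q k j))"
  unfolding Cbar_mixture
  using Cbar_pim_le[OF assms(2,4,5) pim_spec(1)[OF assms(3-5)]] assms(1)
  by (intro sum_mono mult_left_mono) auto

lemma Vfo_mixture_ge:
  assumes "finite K" "\<And>k. k \<in> K \<Longrightarrow> w k \<ge> 0" "(\<Sum>k\<in>K. w k) = 1"
    "\<And>k. k \<in> K \<Longrightarrow> prob_vec M (q k)" "cl > 0" "cu > 0"
  shows "(\<Sum>k\<in>K. w k * Vfo M cu cl beta P n (q k))
    \<le> Vfo M cu cl beta P n (\<lambda>j. \<Sum>k\<in>K. w k * q k j)"
proof -
  have cost: "(\<Sum>k\<in>K. w k * Cbar M cu cl (q k) (pim M cu cl (q k)))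
    \<le> Cbar M cu cl (\<lambda>j. \<Sum>k\<in>K. w k * q k j) (pim M cu cl (\<lambda>j. \<Sum>k\<in>K. w k * q k j))"
    using assms by (intro Cbar_pim_mixture_ge prob_vec_mixture) auto
  show ?thesis
  proof (cases n)
    case 0
    then show ?thesis using cost by simp
  next
    case (Suc m)
    let ?V = "\<lambda>i. Vfo M cu cl beta P m (P i)"
    have "(\<Sum>k\<in>K. w k * Vfo M cu cl beta P n (q k))
        = (\<Sum>k\<in>K. w k * Cbar M cu cl (q k) (pim M cu cl (q k)))
          + beta * (\<Sum>k\<in>K. w k * (\<Sum>i=0..M. q k i * ?V i))"
      using Suc by (simp add: sum.distrib sum_distrib_left algebra_simps)
    also have "(\<Sum>k\<in>K. w k * (\<Sum>i=0..M. q k i * ?V i)) = (\<Sum>i=0..M. (\<Sum>k\<in>K. w k * q k i) * ?V i)"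
      by (rule sum_mixture[symmetric])
    finally show ?thesis using cost Suc by simp
  qed
qed

lemma vecmat_Tr:
  "vecmat M (Tr M r b) P = (\<lambda>j. \<Sum>k=r..M. b k / (\<Sum>i=r..M. b i) * P k j)"
proof
  fix j
  have "vecmat M (Tr M r b) P j = (\<Sum>k=r..M. Tr M r b k * P k j)"
    unfolding vecmat_def by (rule sum.mono_neutral_right) (auto simp: Tr_def)
  also have "\<dots> = (\<Sum>k=r..M. b k / (\<Sum>i=r..M. b i) * P k j)"
    by (rule sum.cong) (auto simp: Tr_def)
  finally show "vecmat M (Tr M r b) P j = (\<Sum>k=r..M. b k / (\<Sum>i=r..M. b i) * P k j)" .
qed

lemma prob_vec_vecmat_Tr:
  assumes "stochastic M P" "\<And>i. i \<le> M \<Longrightarrow> 0 \<le> b i" "(\<Sum>i=r..M. b i) > 0"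
  shows "prob_vec M (vecmat M (Tr M r b) P)"
  unfolding vecmat_Tr using assms
  by (intro prob_vec_mixture) (auto simp: stochastic_def sum_divide_distrib[symmetric])

lemma sum_Vfo_rows_le_Vfo_vecmat_Tr:
  assumes "cl > 0" "cu > 0" "stochastic M P" "\<And>i. i \<le> M \<Longrightarrow> 0 \<le> b i"
    "(\<Sum>i=r..M. b i) > 0"
  shows "(\<Sum>i=r..M. b i * Vfo M cu cl beta P n (P i))
    \<le> (\<Sum>i=r..M. b i) * Vfo M cu cl beta P n (vecmat M (Tr M r b) P)"
proof -
  let ?S = "\<Sum>i=r..M. b i"
  have "(\<Sum>i=r..M. b i * Vfo M cu cl beta P n (P i))
      = ?S * (\<Sum>k=r..M. b k / ?S * Vfo M cu cl beta P n (P k))"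
    using assms(5) by (simp add: sum_distrib_left)
  also have "\<dots> \<le> ?S * Vfo M cu cl beta P n (vecmat M (Tr M r b) P)"
    unfolding vecmat_Tr using assms
    by (intro mult_left_mono Vfo_mixture_ge)
      (auto simp: stochastic_def sum_divide_distrib[symmetric])
  finally show ?thesis .
qed

lemma Vfo_le_Vpo:
  assumes "cu > 0" "cl > 0" "0 \<le> beta" "stochastic M P" "prob_vec M b"
  shows "Vfo M cu cl beta P n b \<le> Vpo M cu cl beta P n b"
  using assms(5)
proof (induction n arbitrary: b)
  case 0
  then show ?case
    using Cbar_pim_le[OF 0 assms(2,1)] by (simp add: Min_ge_iff)
next
  case (Suc n)
  have nonneg: "\<And>i. i \<le> M \<Longrightarrow> 0 \<le> b i"
    using Suc.prems unfolding prob_vec_def by auto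
  have rows: "\<And>i. i \<le> M \<Longrightarrow> prob_vec M (P i)"
    using assms(4) unfolding stochastic_def by auto
  let ?Vfo = "Vfo M cu cl beta P n" and ?Vpo = "Vpo M cu cl beta P n"
  have "Vfo M cu cl beta P (Suc n) b \<le> Cbar M cu cl b r + beta *
      ((if (\<Sum>i=r..M. b i) > 0 then (\<Sum>i=r..M. b i) * ?Vpo (vecmat M (Tr M r b) P) else 0)
       + (\<Sum>i=0..<r. b i * ?Vpo (P i)))" if r: "r \<le> M" for r
  proof -
    let ?S = "\<Sum>i=r..M. b i"
    have upper: "(\<Sum>i=r..M. b i * ?Vfo (P i))
        \<le> (if ?S > 0 then ?S * ?Vpo (vecmat M (Tr M r b) P) else 0)"
    proof (cases "?S > 0")
      case True
      have "?Vfo (vecmat M (Tr M r b) P) \<le> ?Vpo (vecmat M (Tr M r b) P)"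
        using Suc.IH prob_vec_vecmat_Tr[OF assms(4) nonneg True] by blast
      then show ?thesis
        using sum_Vfo_rows_le_Vfo_vecmat_Tr[OF assms(2,1,4) nonneg True, of beta n] True
        by (simp add: order_trans)
    next
      case False
      then have "\<forall>i\<in>{r..M}. b i = 0"
        using nonneg sum_nonneg_eq_0_iff[of "{r..M}" b] sum_nonneg[of "{r..M}" b] by force
      then show ?thesis using False by simp
    qed
    have lower: "(\<Sum>i=0..<r. b i * ?Vfo (P i)) \<le> (\<Sum>i=0..<r. b i * ?Vpo (P i))"
      using r nonneg rows Suc.IH by (intro sum_mono mult_left_mono) auto
    have "Vfo M cu cl beta P (Suc n) b
        = Cbar M cu cl b (pim M cu cl b)
          + beta * ((\<Sum>i=r..M. b i * ?Vfo (P i)) + (\<Sum>i=0..<r. b i * ?Vfo (P i)))"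
      using sum_split_at[of r M "\<lambda>i. b i * ?Vfo (P i)"] r by (simp add: add.commute)
    also have "\<dots> \<le> Cbar M cu cl b r + beta *
      ((if ?S > 0 then ?S * ?Vpo (vecmat M (Tr M r b) P) else 0) + (\<Sum>i=0..<r. b i * ?Vpo (P i)))"
      using Cbar_pim_le[OF Suc.prems assms(2,1) r] upper lower assms(3)
      by (intro add_mono mult_left_mono) auto
    finally show ?thesis .
  qed
  then show ?case by (simp add: Min_ge_iff)
qed

theorem lemma2:
  fixes M T t :: nat and cu cl beta :: real and P :: "nat \<Rightarrow> nat \<Rightarrow> real"
    and b :: "nat \<Rightarrow> real"
  assumes "T \<ge> 1" and "cu > 0" and "cl > 0" and "0 \<le> beta" and "beta \<le> 1"
    and "stochastic M P"
    and "1 \<le> t" and "t \<le> T"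
    and "prob_vec M b"
  shows "Vpo M cu cl beta P (T - t) b \<ge> Vfo M cu cl beta P (T - t) b"
  using Vfo_le_Vpo[OF assms(2,3,4,6,9)] .

end
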